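(* Let $\Omega\subseteq\mathbb R^N$ be a bounded open set and $\alpha\in(0,1)$. For every sequence $(u_i)\subseteq\mathcal X^\alpha(\Omega)$ with $\sup_i\|u_i\|_{\mathcal X^\alpha(\Omega)}<\infty$ there exist $u\in\mathcal X^\alpha(\Omega)$ and a subsequence $(u_{i_j})$ such that $\|u_{i_j}-u\|_{\mathcal Y(\Omega)}\to0$ as $j\to\infty$, i.e. $\|u_{i_j}-u\|^{(1)}_{\mathcal L^1(\Omega)}+\|u_{i_j}-u\|_{L^\infty(\Omega)}\to0$. In particular the inclusion $\mathcal X^\alpha(\Omega)\hookrightarrow\mathcal Y(\Omega)$ is compact.
   Context: $\ell(\rho):=|\ln(\min\{\rho,1/10\})|^{-1}$ ($\rho>0$), $\ell(0):=0$. $d(x):=\operatorname{dist}(x,\partial\Omega)$, $d(x,y):=\min(d(x),d(y))$. For $\alpha,\beta\ge0$ and $u:\Omega\to\mathbb R$: $[u]_{\mathcal L^\alpha(\Omega)}:=\sup_{x\ne y\in\Omega}\frac{|u(x)-u(y)|}{\ell^\alpha(|x-y|)}$, $[u]^{(\beta)}_{\mathcal L^\alpha(\Omega)}:=\sup_{x\neq y\in\Omega}\ell^{\alpha+\beta}(d(x,y))\frac{|u(x)-u(y)|}{\ell^\alpha(|x-y|)}$, $\|u\|^{(\beta)}_{\mathcal L^\alpha(\Omega)}:=\sup_{x\in\Omega}\ell^\beta(d(x))|u(x)|+[u]^{(\beta)}_{\mathcal L^\alpha(\Omega)}$. $\mathcal X^\alpha(\Omega)$ is the space of $u:\mathbb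 R^N\to\mathbb R$ with $u=0$ in $\mathbb R^N\setminus\Omega$ and $\|u\|_{\mathcal X^\alpha(\Omega)}:=\|u\|^{(0)}_{\mathcal L^{1+\alpha}(\Omega)}+[u]_{\mathcal L^\alpha(\mathbb R^N)}<\infty$; $\mathcal Y(\Omega)$ is the space of $f:\Omega\to\mathbb R$ with $\|f\|_{\mathcal Y(\Omega)}:=\|f\|^{(1)}_{\mathcal L^1(\Omega)}+\|f\|_{L^\infty(\Omega)}<\infty$. *)

theory Defs
  imports "HOL-Analysis.Analysis"
begin

definition ell :: "real \<Rightarrow> real" where
  "ell \<rho> = (if \<rho> \<le> 0 then 0 else 1 / \<bar>ln (min \<rho> (1/10))\<bar>)"

definition dB :: "'a::euclidean_space set \<Rightarrow> 'a \<Rightarrow> real" where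
  "dB \<Omega> x = infdist x (frontier \<Omega>)"

text \<open>All (semi)norms are valued in ennreal, so that a supremum may be infinite.\<close>
definition semiL :: "real \<Rightarrow> 'a::euclidean_space set \<Rightarrow> ('a \<Rightarrow> real) \<Rightarrow> ennreal" where
  "semiL \<alpha> S u = (SUP p \<in> {(x,y). x \<in> S \<and> y \<in> S \<and> x \<noteq> y}.
      ennreal (\<bar>u (fst p) - u (snd p)\<bar> / ell (dist (fst p) (snd p)) powr \<alpha>))"

definition wsemiL :: "real \<Rightarrow> real \<Rightarrow> 'a::euclidean_space set \<Rightarrow> ('a \<Rightarrow> real) \<Rightarrow> ennreal" where
  "wsemiL \<alpha> \<beta> \<Omega> u = (SUP p \<in> {(x,y). x \<in> \<Omega> \<and> y \<in> \<Omega> \<and> x \<noteq> y}.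
      ennreal (ell (min (dB \<Omega> (fst p)) (dB \<Omega> (snd p))) powr (\<alpha> + \<beta>)
               * \<bar>u (fst p) - u (snd p)\<bar> / ell (dist (fst p) (snd p)) powr \<alpha>))"

definition wnormL :: "real \<Rightarrow> real \<Rightarrow> 'a::euclidean_space set \<Rightarrow> ('a \<Rightarrow> real) \<Rightarrow> ennreal" where
  "wnormL \<alpha> \<beta> \<Omega> u = (SUP x \<in> \<Omega>. ennreal (ell (dB \<Omega> x) powr \<beta> * \<bar>u x\<bar>)) + wsemiL \<alpha> \<beta> \<Omega> u"

definition Xnorm :: "real \<Rightarrow> 'a::euclidean_space set \<Rightarrow> ('a \<Rightarrow> real) \<Rightarrow> ennreal" where
  "Xnorm \<alpha> \<Omega> u = wnormL (1 + \<alpha>) 0 \<Omega> u + semiL \<alpha> UNIV u"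

definition Xspace :: "real \<Rightarrow> 'a::euclidean_space set \<Rightarrow> ('a \<Rightarrow> real) set" where
  "Xspace \<alpha> \<Omega> = {u. (\<forall>x. x \<notin> \<Omega> \<longrightarrow> u x = 0) \<and> Xnorm \<alpha> \<Omega> u < \<infinity>}"

text \<open>Sup norm over Omega (functions considered are continuous, so ess sup = sup).\<close>
definition supnorm :: "'a::euclidean_space set \<Rightarrow> ('a \<Rightarrow> real) \<Rightarrow> ennreal" where
  "supnorm \<Omega> f = (SUP x \<in> \<Omega>. ennreal \<bar>f x\<bar>)"

definition Ynorm :: "'a::euclidean_space set \<Rightarrow> ('a \<Rightarrow> real) \<Rightarrow> ennreal" where
  "Ynorm \<Omega> f = wnormL 1 1 \<Omega> f + supnorm \<Omega> f"

end

theory Submission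
  imports Defs "HOL-Complex_Analysis.Great_Picard" "HOL-Real_Asymp.Real_Asymp"
begin

text \<open>
  Since ell(rho)^alpha tends to 0 as rho tends to 0, a bound on the global seminorm
  [u]_{L^alpha(R^N)} makes a bounded sequence in X^alpha uniformly bounded and equicontinuous.
  Arzela-Ascoli yields a uniformly convergent subsequence, and every seminorm bound passes to
  the pointwise limit. Convergence in Y then follows by interpolation: for w = u_i - u and
  delta > 0, the weighted quotient ell(d)^2 |w(x) - w(y)| / ell(|x - y|) is at most
  delta^alpha times the X-quotient of w when ell(|x - y|) <= delta, and at most
  2 sup|w| / delta otherwise.
\<close>

lemma ell_nonneg: "0 \<le> ell r"
  unfolding ell_def using abs_ge_zero[of "ln (min r (1/10))"] by (auto simp del: abs_ge_zero)

lemma ell_pos: "0 < r \<Longrightarrow> 0 < ell r"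
  by (simp add: ell_def)

lemma ell_le_1: "ell r \<le> 1"
proof (cases "r \<le> 0")
  case False
  have "ln (min r (1/10)) \<le> ln (1/10)"
    using False by simp
  also have "\<dots> = - ln 10"
    by (simp add: ln_div)
  also have "\<dots> \<le> -1"
    using ln_ge_iff[of 10 1] exp_le by simp
  finally have "1 \<le> \<bar>ln (min r (1/10))\<bar>"
    by linarith
  moreover have "ell r = 1 / \<bar>ln (min r (1/10))\<bar>"
    using False by (simp add: ell_def)
  ultimately show ?thesis
    by (simp only: divide_le_eq_1) simp
qed (simp add: ell_def)

lemma ell_powr_le_1: "0 \<le> a \<Longrightarrow> ell r powr a \<le> 1"
  using ell_nonneg[of r] ell_le_1[of r] by (intro powr_le1) auto

lemma tendsto_ell_powr_0:
  assumes "0 < a"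
  shows "((\<lambda>r. ell r powr a) \<longlongrightarrow> 0) (at_right 0)"
proof -
  have "eventually (\<lambda>r. (- 1 / ln r) powr a = ell r powr a) (at_right 0)"
    unfolding eventually_at_right_field
    by (intro exI[of _ "1/10"]) (auto simp: ell_def)
  moreover have "((\<lambda>r. (- 1 / ln r) powr a) \<longlongrightarrow> 0) (at_right 0)"
    using assms by real_asymp
  ultimately show ?thesis
    by (rule Lim_transform_eventually[rotated])
qed

lemma ennreal_tendsto_0I:
  fixes f :: "nat \<Rightarrow> ennreal"
  assumes "\<And>\<eta>. 0 < \<eta> \<Longrightarrow> eventually (\<lambda>j. f j \<le> ennreal \<eta>) sequentially"
  shows "f \<longlonglongrightarrow> 0"
proof (rule order_tendstoI)
  fix a :: ennreal
  assume "0 < a"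
  then obtain b where b: "0 < b" "b < a"
    using dense by blast
  have "b < top"
    using b(2) top_greatest by (rule less_le_trans)
  with b have "0 < enn2real b" and below: "ennreal (enn2real b) < a"
    by (simp_all add: enn2real_positive_iff)
  from assms[OF this(1)] show "eventually (\<lambda>j. f j < a) sequentially"
    by (rule eventually_mono) (rule le_less_trans[OF _ below])
qed (simp add: not_less_zero)

lemma SUP_ennreal_le_ennreal_iff:
  "0 \<le> B \<Longrightarrow> (SUP p\<in>A. ennreal (h p)) \<le> ennreal B \<longleftrightarrow> (\<forall>p\<in>A. h p \<le> B)"
  by (simp add: SUP_le_iff)

lemma semiL_le_iff:
  "0 \<le> B \<Longrightarrow> semiL \<alpha> S f \<le> ennreal B \<longleftrightarrow>
     (\<forall>x\<in>S. \<forall>y\<in>S. x \<noteq> y \<longrightarrow> \<bar>f x - f y\<bar> / ell (dist x y) powr \<alpha> \<le> B)"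
  unfolding semiL_def by (auto simp: SUP_ennreal_le_ennreal_iff)

lemma wsemiL_le_iff:
  "0 \<le> B \<Longrightarrow> wsemiL \<alpha> \<beta> \<Omega> f \<le> ennreal B \<longleftrightarrow>
     (\<forall>x\<in>\<Omega>. \<forall>y\<in>\<Omega>. x \<noteq> y \<longrightarrow>
        ell (min (dB \<Omega> x) (dB \<Omega> y)) powr (\<alpha> + \<beta>) * \<bar>f x - f y\<bar> / ell (dist x y) powr \<alpha> \<le> B)"
  unfolding wsemiL_def by (auto simp: SUP_ennreal_le_ennreal_iff)

lemma semiL_le_Xnorm: "semiL \<alpha> UNIV f \<le> Xnorm \<alpha> \<Omega> f"
  by (simp add: Xnorm_def)

lemma wsemiL_le_Xnorm: "wsemiL (1 + \<alpha>) 0 \<Omega> f \<le> Xnorm \<alpha> \<Omega> f"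
  by (simp add: Xnorm_def wnormL_def add.assoc add_increasing)

lemma semiL_le_imp_holder:
  assumes "semiL \<alpha> S f \<le> ennreal B" "0 \<le> B" "x \<in> S" "y \<in> S"
  shows "\<bar>f x - f y\<bar> \<le> B * ell (dist x y) powr \<alpha>"
proof (cases "x = y")
  case False
  then have "0 < ell (dist x y) powr \<alpha>"
    using ell_pos[of "dist x y"] by simp
  moreover have "\<bar>f x - f y\<bar> / ell (dist x y) powr \<alpha> \<le> B"
    using False assms by (simp add: semiL_le_iff)
  ultimately show ?thesis
    by (metis pos_divide_le_eq mult.commute)
qed (simp add: assms(2))

lemma semiL_le_imp_abs_le:
  assumes "semiL \<alpha> UNIV f \<le> ennreal B" "0 \<le> B" "0 \<le> \<alpha>" "f y = 0"
  shows "\<bar>f x\<bar> \<le> B"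
proof -
  have "\<bar>f x\<bar> = \<bar>f x - f y\<bar>"
    using assms(4) by simp
  also have "\<dots> \<le> B * ell (dist x y) powr \<alpha>"
    using assms(1,2) by (rule semiL_le_imp_holder) auto
  also have "\<dots> \<le> B"
    using assms(2,3) ell_powr_le_1 by (simp add: mult_left_le)
  finally show ?thesis .
qed

lemma semiL_le_imp_uniformly_equicontinuous:
  assumes "\<And>n. semiL \<alpha> UNIV (f n) \<le> ennreal B" "0 \<le> B" "0 < \<alpha>" "0 < e"
  shows "\<exists>d>0. \<forall>n x y. dist x y < d \<longrightarrow> \<bar>f n x - f n y\<bar> < e"
proof -
  have "eventually (\<lambda>r. ell r powr \<alpha> < e / (B + 1)) (at_right 0)"
    using order_tendstoD(2)[OF tendsto_ell_powr_0[OF assms(3)]] assms(2,4) by simp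
  then obtain d where d: "0 < d" "\<And>r. 0 < r \<Longrightarrow> r < d \<Longrightarrow> ell r powr \<alpha> < e / (B + 1)"
    unfolding eventually_at_right_field by auto
  have "\<bar>f n x - f n y\<bar> < e" if "dist x y < d" for n x y
  proof (cases "x = y")
    case False
    have "\<bar>f n x - f n y\<bar> \<le> B * ell (dist x y) powr \<alpha>"
      using assms(1,2) by (rule semiL_le_imp_holder) auto
    also have "\<dots> \<le> B * (e / (B + 1))"
      using d(2)[of "dist x y"] False that assms(2) by (intro mult_left_mono) auto
    also have "\<dots> < e"
      using assms(2,4) by (simp add: field_simps)
    finally show ?thesis .
  qed (use assms(4) in simp)
  with d(1) show ?thesis
    by blast
qed

lemma Arzela_Ascoli_vanishing_outside:
  fixes f :: "nat \<Rightarrow> 'a::euclidean_space \<Rightarrow> real"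
  assumes "bounded \<Omega>" and out: "\<And>n x. x \<notin> \<Omega> \<Longrightarrow> f n x = 0" and "\<And>n x. \<bar>f n x\<bar> \<le> B"
    and equicont: "\<And>e. 0 < e \<Longrightarrow> \<exists>d>0. \<forall>n x y. dist x y < d \<longrightarrow> \<bar>f n x - f n y\<bar> < e"
  obtains g r where "strict_mono r" "uniform_limit UNIV (\<lambda>j. f (r j)) g sequentially"
    and "\<And>x. x \<notin> \<Omega> \<Longrightarrow> g x = 0"
proof -
  obtain c R where \<Omega>: "\<Omega> \<subseteq> cball c R"
    using assms(1) bounded_subset_cball by blast
  obtain h r where r: "strict_mono (r :: nat \<Rightarrow> nat)"
    and h: "\<And>e. 0 < e \<Longrightarrow> \<exists>N. \<forall>n x. n \<ge> N \<and> x \<in> cball c R \<longrightarrow> norm (f (r n) x - h x) < e"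
  proof (rule Arzela_Ascoli[of "cball c R" f B])
    show "\<exists>d>0. \<forall>n y. y \<in> cball c R \<and> norm (x - y) < d \<longrightarrow> norm (f n x - f n y) < e"
      if "0 < e" for x e
      using equicont[OF that] by (auto simp: dist_norm)
    show "norm (f n x) \<le> B" for n x
      using assms(3) by simp
    show "compact (cball c R)"
      by simp
  qed blast
  define g where "g x = (if x \<in> \<Omega> then h x else 0)" for x
  have "uniform_limit UNIV (\<lambda>j. f (r j)) g sequentially"
    unfolding uniform_limit_sequentially_iff
  proof (intro allI impI)
    fix e :: real
    assume "0 < e"
    with h obtain N where N: "\<forall>n x. n \<ge> N \<and> x \<in> cball c R \<longrightarrow> norm (f (r n) x - h x) < e"
      by blast
    have "dist (f (r n) x) (g x) < e" if "n \<ge> N" for n x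
    proof (cases "x \<in> \<Omega>")
      case True
      with \<Omega> have "x \<in> cball c R"
        by blast
      with N that True show ?thesis
        by (simp add: g_def dist_norm)
    qed (simp add: g_def out \<open>0 < e\<close>)
    then show "\<exists>N. \<forall>n\<ge>N. \<forall>x\<in>UNIV. dist (f (r n) x) (g x) < e"
      by blast
  qed
  with r that show ?thesis
    by (simp add: g_def)
qed

lemma semiL_le_limit:
  assumes "\<And>n. semiL \<alpha> S (f n) \<le> ennreal B" "0 \<le> B" "\<And>x. (\<lambda>n. f n x) \<longlonglongrightarrow> g x"
  shows "semiL \<alpha> S g \<le> ennreal B"
  unfolding semiL_le_iff[OF assms(2)]
proof (intro ballI impI)
  fix x y
  assume "x \<in> S" "y \<in> S" "x \<noteq> y"
  with assms(1,2) have "\<forall>n. \<bar>f n x - f n y\<bar> / ell (dist x y) powr \<alpha> \<le> B"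
    by (simp add: semiL_le_iff)
  then show "\<bar>g x - g y\<bar> / ell (dist x y) powr \<alpha> \<le> B"
    using ell_pos[of "dist x y"] \<open>x \<noteq> y\<close>
    by (intro LIMSEQ_le_const2[of "\<lambda>n. \<bar>f n x - f n y\<bar> / ell (dist x y) powr \<alpha>"])
       (auto intro!: tendsto_intros assms(3))
qed

lemma wsemiL_le_limit:
  assumes "\<And>n. wsemiL \<alpha> \<beta> \<Omega> (f n) \<le> ennreal B" "0 \<le> B" "\<And>x. (\<lambda>n. f n x) \<longlonglongrightarrow> g x"
  shows "wsemiL \<alpha> \<beta> \<Omega> g \<le> ennreal B"
  unfolding wsemiL_le_iff[OF assms(2)]
proof (intro ballI impI)
  fix x y
  assume "x \<in> \<Omega>" "y \<in> \<Omega>" "x \<noteq> y"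
  define c where "c = ell (min (dB \<Omega> x) (dB \<Omega> y)) powr (\<alpha> + \<beta>)"
  with assms(1,2) \<open>x \<in> \<Omega>\<close> \<open>y \<in> \<Omega>\<close> \<open>x \<noteq> y\<close>
  have "\<forall>n. c * \<bar>f n x - f n y\<bar> / ell (dist x y) powr \<alpha> \<le> B"
    by (simp add: wsemiL_le_iff)
  then show "c * \<bar>g x - g y\<bar> / ell (dist x y) powr \<alpha> \<le> B"
    using ell_pos[of "dist x y"] \<open>x \<noteq> y\<close>
    by (intro LIMSEQ_le_const2[of "\<lambda>n. c * \<bar>f n x - f n y\<bar> / ell (dist x y) powr \<alpha>"])
       (auto intro!: tendsto_intros assms(3))
qed

lemma wsemiL_diff_le:
  assumes "wsemiL \<alpha> \<beta> \<Omega> f \<le> ennreal B" "wsemiL \<alpha> \<beta> \<Omega> g \<le> ennreal C" "0 \<le> B" "0 \<le> C"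
  shows "wsemiL \<alpha> \<beta> \<Omega> (\<lambda>x. f x - g x) \<le> ennreal (B + C)"
  unfolding wsemiL_le_iff[OF add_nonneg_nonneg[OF assms(3,4)]]
proof (intro ballI impI)
  fix x y
  assume xy: "x \<in> \<Omega>" "y \<in> \<Omega>" "x \<noteq> y"
  define c where "c = ell (min (dB \<Omega> x) (dB \<Omega> y)) powr (\<alpha> + \<beta>)"
  define L where "L = ell (dist x y) powr \<alpha>"
  have "0 \<le> c" "0 < L"
    using xy ell_pos[of "dist x y"] by (simp_all add: c_def L_def)
  have "\<bar>f x - g x - (f y - g y)\<bar> \<le> \<bar>f x - f y\<bar> + \<bar>g x - g y\<bar>"
    by linarith
  then have "c * \<bar>f x - g x - (f y - g y)\<bar> / L \<le> c * (\<bar>f x - f y\<bar> + \<bar>g x - g y\<bar>) / L"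
    using \<open>0 \<le> c\<close> \<open>0 < L\<close> by (intro divide_right_mono mult_left_mono) auto
  also have "\<dots> = c * \<bar>f x - f y\<bar> / L + c * \<bar>g x - g y\<bar> / L"
    by (simp add: distrib_left add_divide_distrib)
  also have "\<dots> \<le> B + C"
    using assms xy by (intro add_mono) (simp_all add: wsemiL_le_iff c_def L_def)
  finally show "c * \<bar>f x - g x - (f y - g y)\<bar> / L \<le> B + C" .
qed

lemma Xnorm_le:
  assumes "\<And>x. \<bar>f x\<bar> \<le> B" "semiL \<alpha> UNIV f \<le> ennreal B" "wsemiL (1 + \<alpha>) 0 \<Omega> f \<le> ennreal B"
  shows "Xnorm \<alpha> \<Omega> f \<le> ennreal (3 * B)"
proof -
  have "0 \<le> B"
    using assms(1) abs_ge_zero order_trans by blast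
  have "ell (dB \<Omega> x) powr 0 * \<bar>f x\<bar> \<le> B" for x
    using assms(1)[of x] \<open>0 \<le> B\<close> by simp
  with \<open>0 \<le> B\<close> have "(SUP x\<in>\<Omega>. ennreal (ell (dB \<Omega> x) powr 0 * \<bar>f x\<bar>)) \<le> ennreal B"
    by (simp add: SUP_ennreal_le_ennreal_iff)
  with assms(2,3) have "Xnorm \<alpha> \<Omega> f \<le> ennreal B + ennreal B + ennreal B"
    unfolding Xnorm_def wnormL_def by (intro add_mono)
  with \<open>0 \<le> B\<close> show ?thesis
    by (simp flip: ennreal_plus)
qed

lemma Xspace_if_seminorms_le:
  assumes "\<And>x. x \<notin> \<Omega> \<Longrightarrow> f x = 0" "y \<notin> \<Omega>"
    and "semiL \<alpha> UNIV f \<le> ennreal B" "wsemiL (1 + \<alpha>) 0 \<Omega> f \<le> ennreal B" "0 \<le> B" "0 \<le> \<alpha>"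
  shows "f \<in> Xspace \<alpha> \<Omega>"
proof -
  have "Xnorm \<alpha> \<Omega> f \<le> ennreal (3 * B)"
    using semiL_le_imp_abs_le[OF assms(3,5,6) assms(1)[OF assms(2)]] assms(3,4) by (rule Xnorm_le)
  also have "\<dots> < \<infinity>"
    by simp
  finally show ?thesis
    using assms(1) by (simp add: Xspace_def)
qed

lemma interpolation_ineq:
  fixes E L D C e \<delta> a :: real
  assumes "0 \<le> E" "E \<le> 1" "0 < L" "0 < \<delta>" "0 < a" "a < 1" "0 \<le> D"
    and X: "E powr (1 + a) * D / L powr (1 + a) \<le> C" and "D \<le> e"
  shows "E powr 2 * D / L \<le> C * \<delta> powr a + e / \<delta>"
proof -
  have "0 \<le> C"
    using X assms(1,3,7) by (smt (verit) divide_nonneg_nonneg mult_nonneg_nonneg powr_ge_zero)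
  show ?thesis
  proof (cases "L \<le> \<delta>")
    case True
    have "E powr 2 = E powr (1 - a) * E powr (1 + a)"
      by (simp flip: powr_add)
    moreover have "L powr (1 + a) = L * L powr a"
      using assms(3) by (simp add: powr_add)
    ultimately have "E powr 2 * D / L = E powr (1 - a) * (E powr (1 + a) * D / L powr (1 + a)) * L powr a"
      using assms(3) by (simp add: field_simps)
    also have "\<dots> \<le> 1 * C * \<delta> powr a"
      using X True assms \<open>0 \<le> C\<close> by (intro mult_mono powr_le1 powr_mono2) auto
    finally show ?thesis
      using assms(4,7,9) by (smt (verit) divide_nonneg_pos)
  next
    case False
    have "E powr 2 * D / L \<le> D / L"
      using assms(1-3,7) power_le_one[of E 2] by (simp add: divide_right_mono mult_left_le_one_le)
    also have "\<dots> \<le> e / \<delta>"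
      using False assms by (intro frac_le) auto
    finally show ?thesis
      using \<open>0 \<le> C\<close> by (smt (verit) mult_nonneg_nonneg powr_ge_zero)
  qed
qed

lemma Ynorm_le_interpolation:
  assumes "wsemiL (1 + \<alpha>) 0 \<Omega> w \<le> ennreal B" "0 \<le> B" "\<And>x. \<bar>w x\<bar> \<le> e"
    and "0 < \<delta>" "0 < \<alpha>" "\<alpha> < 1"
  shows "Ynorm \<Omega> w \<le> ennreal (2 * e + B * \<delta> powr \<alpha> + 2 * e / \<delta>)"
proof -
  have "0 \<le> e"
    using assms(3) abs_ge_zero order_trans by blast
  have "ell (dB \<Omega> x) powr 1 * \<bar>w x\<bar> \<le> e" for x
    using mult_mono[OF ell_le_1 assms(3)[of x]] by (simp add: ell_nonneg)
  with \<open>0 \<le> e\<close> have sup_weighted: "(SUP x\<in>\<Omega>. ennreal (ell (dB \<Omega> x) powr 1 * \<bar>w x\<bar>)) \<le> ennreal e"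
    by (simp add: SUP_ennreal_le_ennreal_iff)
  have sup: "supnorm \<Omega> w \<le> ennreal e"
    using \<open>0 \<le> e\<close> assms(3) by (simp add: supnorm_def SUP_ennreal_le_ennreal_iff)
  have bound_nonneg: "0 \<le> B * \<delta> powr \<alpha> + 2 * e / \<delta>"
    using assms(2,4) \<open>0 \<le> e\<close> by simp
  have "wsemiL 1 1 \<Omega> w \<le> ennreal (B * \<delta> powr \<alpha> + 2 * e / \<delta>)"
    unfolding wsemiL_le_iff[OF bound_nonneg]
  proof (intro ballI impI)
    fix x y
    assume xy: "x \<in> \<Omega>" "y \<in> \<Omega>" "x \<noteq> y"
    have "ell (min (dB \<Omega> x) (dB \<Omega> y)) powr 2 * \<bar>w x - w y\<bar> / ell (dist x y)
        \<le> B * \<delta> powr \<alpha> + 2 * e / \<delta>"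
      using assms(1,2) xy assms(3)[of x] assms(3)[of y]
      by (intro interpolation_ineq[OF ell_nonneg ell_le_1 ell_pos assms(4-6)])
         (auto simp: wsemiL_le_iff)
    then show "ell (min (dB \<Omega> x) (dB \<Omega> y)) powr (1 + 1) * \<bar>w x - w y\<bar> / ell (dist x y) powr 1
        \<le> B * \<delta> powr \<alpha> + 2 * e / \<delta>"
      using xy ell_pos[of "dist x y"] by simp
  qed
  with sup_weighted sup have "Ynorm \<Omega> w \<le> ennreal e + ennreal (B * \<delta> powr \<alpha> + 2 * e / \<delta>) + ennreal e"
    unfolding Ynorm_def wnormL_def by (intro add_mono)
  with \<open>0 \<le> e\<close> assms(2,4) show ?thesis
    by (simp add: add.assoc flip: ennreal_plus)
qed

lemma Ynorm_diff_tendsto_0: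
  assumes lim: "uniform_limit UNIV f g sequentially"
    and "\<And>j. wsemiL (1 + \<alpha>) 0 \<Omega> (f j) \<le> ennreal B" "wsemiL (1 + \<alpha>) 0 \<Omega> g \<le> ennreal B"
    and "0 \<le> B" "0 < \<alpha>" "\<alpha> < 1"
  shows "(\<lambda>j. Ynorm \<Omega> (\<lambda>x. f j x - g x)) \<longlonglongrightarrow> 0"
proof (rule ennreal_tendsto_0I)
  fix \<eta> :: real
  assume "0 < \<eta>"
  define \<delta> where "\<delta> = (\<eta> / (4 * B + 1)) powr (1 / \<alpha>)"
  define e where "e = min (\<eta> / 8) (\<eta> * \<delta> / 8)"
  have "0 < \<delta>"
    using \<open>0 < \<eta>\<close> assms(4) by (simp add: \<delta>_def)
  have "(B + B) * \<delta> powr \<alpha> = 2 * B * \<eta> / (4 * B + 1)"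
    using \<open>0 < \<eta>\<close> assms(4,5) by (simp add: \<delta>_def powr_powr)
  also have "\<dots> \<le> \<eta> / 2"
    using \<open>0 < \<eta>\<close> assms(4) by (simp add: field_simps)
  moreover have "2 * e \<le> \<eta> / 4" "2 * e / \<delta> \<le> \<eta> / 4"
    using \<open>0 < \<delta>\<close> by (auto simp: e_def min_def field_simps)
  ultimately have budget: "2 * e + (B + B) * \<delta> powr \<alpha> + 2 * e / \<delta> \<le> \<eta>"
    by linarith
  have "0 < e"
    using \<open>0 < \<delta>\<close> \<open>0 < \<eta>\<close> by (simp add: e_def)
  with lim have "eventually (\<lambda>j. \<forall>x\<in>UNIV. dist (f j x) (g x) < e) sequentially"
    by (rule uniform_limitD)
  then show "eventually (\<lambda>j. Ynorm \<Omega> (\<lambda>x. f j x - g x) \<le> ennreal \<eta>) sequentially"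
  proof (rule eventually_mono)
    fix j
    assume "\<forall>x\<in>UNIV. dist (f j x) (g x) < e"
    then have "\<And>x. \<bar>f j x - g x\<bar> \<le> e"
      by (simp add: dist_real_def less_imp_le)
    then have "Ynorm \<Omega> (\<lambda>x. f j x - g x) \<le> ennreal (2 * e + (B + B) * \<delta> powr \<alpha> + 2 * e / \<delta>)"
      using wsemiL_diff_le[OF assms(2,3,4,4)] assms(4-6) \<open>0 < \<delta>\<close>
      by (intro Ynorm_le_interpolation) auto
    also have "\<dots> \<le> ennreal \<eta>"
      using budget by (rule ennreal_leI)
    finally show "Ynorm \<Omega> (\<lambda>x. f j x - g x) \<le> ennreal \<eta>" .
  qed
qed

theorem lemma7p4:
  fixes \<Omega> :: "'a::euclidean_space set" and \<alpha> :: real and u :: "nat \<Rightarrow> 'a \<Rightarrow> real"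
  assumes "open \<Omega>" and "bounded \<Omega>" and "0 < \<alpha>" and "\<alpha> < 1"
    and "\<And>i. u i \<in> Xspace \<alpha> \<Omega>"
    and "(SUP i. Xnorm \<alpha> \<Omega> (u i)) < \<infinity>"
  shows "\<exists>v \<in> Xspace \<alpha> \<Omega>. \<exists>r::nat \<Rightarrow> nat. strict_mono r \<and>
           ((\<lambda>j. Ynorm \<Omega> (\<lambda>x. u (r j) x - v x)) \<longlongrightarrow> 0) sequentially"
proof -
  define B where "B = enn2real (SUP i. Xnorm \<alpha> \<Omega> (u i))"
  have "0 \<le> B" "\<And>i. Xnorm \<alpha> \<Omega> (u i) \<le> ennreal B"
    using assms(6) by (auto simp: B_def intro: SUP_upper)
  then have semi: "\<And>i. semiL \<alpha> UNIV (u i) \<le> ennreal B"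
    and wsemi: "\<And>i. wsemiL (1 + \<alpha>) 0 \<Omega> (u i) \<le> ennreal B"
    using order_trans[OF semiL_le_Xnorm] order_trans[OF wsemiL_le_Xnorm] by blast+
  have out: "\<And>i x. x \<notin> \<Omega> \<Longrightarrow> u i x = 0"
    using assms(5) by (simp add: Xspace_def)
  obtain y where "y \<notin> \<Omega>"
    using assms(2) not_bounded_UNIV by (metis bounded_subset subsetI)
  have "0 \<le> \<alpha>"
    using assms(3) by simp
  have bounded: "\<And>i x. \<bar>u i x\<bar> \<le> B"
    by (rule semiL_le_imp_abs_le[OF semi \<open>0 \<le> B\<close> \<open>0 \<le> \<alpha>\<close> out[OF \<open>y \<notin> \<Omega>\<close>]])
  obtain v r where "strict_mono r" and lim: "uniform_limit UNIV (\<lambda>j. u (r j)) v sequentially"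
    and v_out: "\<And>x. x \<notin> \<Omega> \<Longrightarrow> v x = 0"
  proof (rule Arzela_Ascoli_vanishing_outside[OF assms(2) out bounded])
    show "\<exists>d>0. \<forall>n x y. dist x y < d \<longrightarrow> \<bar>u n x - u n y\<bar> < e" if "0 < e" for e
      by (rule semiL_le_imp_uniformly_equicontinuous[OF semi \<open>0 \<le> B\<close> assms(3) that])
  qed (blast intro: that)+
  have pointwise: "\<And>x. (\<lambda>j. u (r j) x) \<longlonglongrightarrow> v x"
    using tendsto_uniform_limitI[OF lim] by simp
  have v_wsemi: "wsemiL (1 + \<alpha>) 0 \<Omega> v \<le> ennreal B"
    by (rule wsemiL_le_limit[OF wsemi \<open>0 \<le> B\<close> pointwise])
  have "v \<in> Xspace \<alpha> \<Omega>"
    using v_out \<open>y \<notin> \<Omega>\<close> semiL_le_limit[OF semi \<open>0 \<le> B\<close> pointwise] v_wsemi \<open>0 \<le> B\<close> \<open>0 \<le> \<alpha>\<close>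
    by (rule Xspace_if_seminorms_le)
  moreover have "(\<lambda>j. Ynorm \<Omega> (\<lambda>x. u (r j) x - v x)) \<longlonglongrightarrow> 0"
    using Ynorm_diff_tendsto_0[OF lim wsemi v_wsemi \<open>0 \<le> B\<close> assms(3,4)] .
  ultimately show ?thesis
    using \<open>strict_mono r\<close> by blast
qed

end
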